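(* $\mathfrak{t}((c_0^+\setminus \ell^1,\leq ^* ))=\mathfrak{t}$.
   Context: $c_0^+$ is the set of all sequences of positive reals converging to $0$, $\ell^1$ the set of real sequences with convergent sum, so $c_0^+\setminus\ell^1$ is the set of positive null sequences with divergent sum. For $\bar f,\bar g\in c_0^+\setminus\ell^1$, $\bar f\leq^*\bar g$ means $\{n: f_n>g_n\}$ is finite. For an ordering $P$, $\mathfrak{t}(P)$ is the least cardinal $\kappa$ such that there is a decreasing (well-ordered) chain of length $\kappa$ in $P$ with no lower bound in $P$. $\mathfrak{t}$ is the tower number, i.e. $\mathfrak{t}(([\omega]^\omega,\subseteq^* ))$: the least length of a $\subseteq^*$-decreasing well-ordered sequence of infinite subsets of $\omega$ with no infinite pseudo-intersection. *)

theory Defs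
  imports Complex_Main
begin

definition c0plus_not_l1 :: "(nat \<Rightarrow> real) set" where
  "c0plus_not_l1 = {f. (\<forall>n. 0 < f n) \<and> f \<longlonglongrightarrow> 0 \<and> \<not> summable f}"

definition ae_le :: "(nat \<Rightarrow> real) \<Rightarrow> (nat \<Rightarrow> real) \<Rightarrow> bool" where
  "ae_le f g \<longleftrightarrow> finite {n. f n > g n}"

definition inf_subsets :: "nat set set" where
  "inf_subsets = {A. infinite A}"

definition ae_subset :: "nat set \<Rightarrow> nat set \<Rightarrow> bool" where
  "ae_subset A B \<longleftrightarrow> finite (A - B)"

definition unbounded_decr_chain :: "'x set \<Rightarrow> ('x \<Rightarrow> 'x \<Rightarrow> bool) \<Rightarrow> 'i rel \<Rightarrow> bool" where
  "unbounded_decr_chain P le r \<longleftrightarrow> Well_order r \<and>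
     (\<exists>f. (\<forall>i\<in>Field r. f i \<in> P) \<and>
          (\<forall>i j. (i, j) \<in> r \<longrightarrow> le (f j) (f i)) \<and>
          \<not> (\<exists>b\<in>P. \<forall>i\<in>Field r. le b (f i)))"

text \<open>t(P) \<le> kappa: some cardinal lambda \<le> kappa (represented on the carrier type of kappa)
  is the length of an unbounded decreasing chain in P.\<close>
definition t_le :: "'x set \<Rightarrow> ('x \<Rightarrow> 'x \<Rightarrow> bool) \<Rightarrow> 'a rel \<Rightarrow> bool" where
  "t_le P le \<kappa> \<longleftrightarrow> (\<exists>r :: 'a rel. Card_order r \<and> (r, \<kappa>) \<in> ordLeq \<and> unbounded_decr_chain P le r)"

end

theory Submission
  imports Defs "HOL-Library.Countable"
begin

text \<open>
  A \<open>\<subseteq>\<^sup>*\<close>-tower \<open>(A\<^sub>i)\<close> gives the chain of sequences equal to \<open>1/\<surd>(n+1)\<close> on the blocks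
  \<open>[m\<^sup>2, (m+1)\<^sup>2)\<close> with \<open>m \<in> A\<^sub>i\<close> and to \<open>2\<^sup>-\<^sup>n\<close> elsewhere; each such block has mass at least 1,
  and the blocks on which a lower bound exceeds \<open>2\<^sup>-\<^sup>n\<close> would form a pseudo-intersection of the tower.

  Conversely, assume every well-ordered \<open>\<subseteq>\<^sup>*\<close>-chain of infinite sets of length at most \<open>\<kappa>\<close> has a
  pseudo-intersection (for lengths that are not cardinals, pass to a cofinal subchain of smaller
  order type), and let \<open>(f\<^sub>i)\<close> be a \<open>\<le>\<^sup>*\<close>-decreasing chain. As in the proof of \<open>t \<le> b\<close>, one
  function \<open>H\<close> eventually dominates, for every \<open>i\<close>, both the exponent of the largest power
  \<open>2\<^sup>-\<^sup>k \<le> f\<^sub>i(n)\<close> and the point from which the partial sums of \<open>f\<^sub>i\<close> starting at \<open>n\<close> reach 2.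
  This gives a positive common minorant \<open>2\<^sup>-\<^sup>H\<close> and blocks on almost all of which every \<open>f\<^sub>i\<close> has
  mass at least 2. On each block there are only finitely many dyadic profiles of mass at least
  \<open>1/2\<close>; those lying below \<open>f\<^sub>i\<close> form, coded in \<open>\<omega>\<close>, a \<open>\<subseteq>\<^sup>*\<close>-decreasing chain of infinite sets.
  A pseudo-intersection of it yields infinitely many blocks carrying a profile that lies below
  almost every \<open>f\<^sub>i\<close>, and gluing these profiles onto the minorant gives a lower bound in
  \<open>c\<^sub>0\<^sup>+ \<setminus> l\<^sup>1\<close>.
\<close>

unbundle cardinal_syntax

section \<open>Blocks\<close>

definition block :: "(nat \<Rightarrow> nat) \<Rightarrow> nat \<Rightarrow> nat set" where
  "block t m = {t m..<t (Suc m)}"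

definition block_index :: "(nat \<Rightarrow> nat) \<Rightarrow> nat \<Rightarrow> nat" where
  "block_index t n = (LEAST m. n < t (Suc m))"

lemma le_of_mem_block: "strict_mono t \<Longrightarrow> n \<in> block t m \<Longrightarrow> m \<le> n"
  unfolding block_def using strict_mono_imp_increasing[of t m] by auto

lemma block_index_eq:
  assumes "strict_mono t" "n \<in> block t m"
  shows "block_index t n = m"
  unfolding block_index_def
proof (rule Least_equality)
  show "n < t (Suc m)" using assms(2) by (simp add: block_def)
next
  fix k assume k: "n < t (Suc k)"
  show "m \<le> k"
  proof (rule ccontr)
    assume "\<not> m \<le> k"
    then have "t (Suc k) \<le> t m" using assms(1) by (simp add: strict_mono_less_eq)
    then show False using k assms(2) by (simp add: block_def)
  qed
qed

lemma mem_block_index: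
  assumes "strict_mono t" "t 0 = 0"
  shows "n \<in> block t (block_index t n)"
proof -
  have "n < t (Suc n)" using strict_mono_imp_increasing[OF assms(1), of "Suc n"] by simp
  then have upper: "n < t (Suc (block_index t n))"
    unfolding block_index_def by (rule LeastI)
  have "t (block_index t n) \<le> n"
  proof (cases "block_index t n")
    case (Suc k)
    then have "\<not> n < t (Suc k)" unfolding block_index_def by (metis lessI not_less_Least)
    then show ?thesis using Suc by simp
  qed (use assms(2) in simp)
  with upper show ?thesis by (simp add: block_def)
qed

lemma not_summable_if_block_sums_ge:
  fixes f :: "nat \<Rightarrow> real"
  assumes "strict_mono t" "infinite M" "0 < c" "\<And>m. m \<in> M \<Longrightarrow> c \<le> sum f (block t m)"
  shows "\<not> summable f"
proof
  assume "summable f"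
  then obtain N where N: "\<And>m n. N \<le> m \<Longrightarrow> norm (sum f {m..<n}) < c"
    unfolding summable_Cauchy using assms(3) by blast
  obtain m where "m \<in> M" "N \<le> m"
    using assms(2) by (meson finite_nat_set_iff_bounded_le le_cases)
  moreover have "m \<le> t m" using strict_mono_imp_increasing[OF assms(1)] .
  ultimately have "norm (sum f (block t m)) < c" unfolding block_def using N by simp
  with assms(4)[OF \<open>m \<in> M\<close>] show False by simp
qed

section \<open>Towers give unbounded chains of sequences\<close>

lemma unbounded_decr_chain_transfer:
  assumes dec_chain: "unbounded_decr_chain P le r"
    and maps: "\<And>x. x \<in> P \<Longrightarrow> \<phi> x \<in> Q"
    and mono: "\<And>x y. x \<in> P \<Longrightarrow> y \<in> P \<Longrightarrow> le x y \<Longrightarrow> le' (\<phi> x) (\<phi> y)"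
    and into: "\<And>q. q \<in> Q \<Longrightarrow> \<psi> q \<in> P"
    and reflect: "\<And>q x. q \<in> Q \<Longrightarrow> x \<in> P \<Longrightarrow> le' q (\<phi> x) \<Longrightarrow> le (\<psi> q) x"
  shows "unbounded_decr_chain Q le' r"
proof -
  obtain f where WO: "Well_order r" and fP: "\<forall>i\<in>Field r. f i \<in> P"
    and dec: "\<forall>i j. (i, j) \<in> r \<longrightarrow> le (f j) (f i)"
    and unb: "\<not> (\<exists>b\<in>P. \<forall>i\<in>Field r. le b (f i))"
    using dec_chain unfolding unbounded_decr_chain_def by blast
  have "\<forall>i j. (i, j) \<in> r \<longrightarrow> le' (\<phi> (f j)) (\<phi> (f i))"
    using dec fP mono by (blast intro: FieldI1 FieldI2)
  moreover have "\<not> (\<exists>q\<in>Q. \<forall>i\<in>Field r. le' q (\<phi> (f i)))"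
    using unb fP into reflect by blast
  ultimately show ?thesis
    unfolding unbounded_decr_chain_def using WO fP maps by (intro conjI exI[of _ "\<phi> \<circ> f"]) auto
qed

definition tower_seq :: "nat set \<Rightarrow> nat \<Rightarrow> real" where
  "tower_seq A n = (if block_index (\<lambda>m. m * m) n \<in> A then 1 / sqrt (real n + 1) else (1/2)^n)"

lemma strict_mono_square: "strict_mono (\<lambda>m::nat. m * m)"
  unfolding strict_mono_Suc_iff by simp

lemma real_Suc_le_two_power: "real n + 1 \<le> (2::real)^n"
proof -
  have "Suc n \<le> (2::nat)^n" using less_exp[of n] by (simp add: Suc_leI)
  then have "real (Suc n) \<le> real (2^n)" by (simp only: of_nat_le_iff)
  then show ?thesis by simp
qed

lemma half_pow_le_inverse_sqrt: "(1/2::real)^n \<le> 1 / sqrt (real n + 1)"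
proof -
  note real_Suc_le_two_power[of n]
  also have "(2::real)^n \<le> (2^n)\<^sup>2" by (simp add: power2_eq_square)
  finally have "sqrt (real n + 1) \<le> 2^n" by (intro real_le_lsqrt) simp_all
  then show ?thesis by (simp add: power_one_over frac_le)
qed

lemma tower_seq_pos: "0 < tower_seq A n"
  unfolding tower_seq_def by simp

lemma tower_seq_le_inverse_sqrt: "tower_seq A n \<le> 1 / sqrt (real n + 1)"
  unfolding tower_seq_def using half_pow_le_inverse_sqrt by simp

lemma tower_seq_tendsto_zero: "tower_seq A \<longlonglongrightarrow> 0"
proof (rule tendsto_sandwich[of "\<lambda>_. 0" _ _ "\<lambda>n. 1 / sqrt (real n + 1)"])
  have "(\<lambda>n. sqrt (inverse (real n + 1))) \<longlonglongrightarrow> sqrt 0"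
    by (intro tendsto_real_sqrt) (use LIMSEQ_inverse_real_of_nat in \<open>simp add: add.commute\<close>)
  then show "(\<lambda>n. 1 / sqrt (real n + 1)) \<longlonglongrightarrow> 0"
    by (simp add: real_sqrt_inverse divide_inverse add.commute)
qed (auto intro: always_eventually less_imp_le tower_seq_pos tower_seq_le_inverse_sqrt)

lemma tower_seq_block_sum:
  assumes "m \<in> A"
  shows "1 \<le> sum (tower_seq A) (block (\<lambda>m. m * m) m)"
proof -
  have "1 / (real m + 1) \<le> tower_seq A n" if n: "n \<in> block (\<lambda>m. m * m) m" for n
  proof -
    have "real n + 1 \<le> (real m + 1)\<^sup>2"
      using n unfolding block_def power2_eq_square by (simp add: algebra_simps flip: of_nat_mult)
    then have "sqrt (real n + 1) \<le> real m + 1" by (intro real_le_lsqrt) simp_all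
    moreover have "tower_seq A n = 1 / sqrt (real n + 1)"
      using assms block_index_eq[OF strict_mono_square n] by (simp add: tower_seq_def)
    ultimately show ?thesis by (simp add: frac_le)
  qed
  then have "sum (\<lambda>_. 1 / (real m + 1)) (block (\<lambda>m. m * m) m) \<le> sum (tower_seq A) (block (\<lambda>m. m * m) m)"
    by (rule sum_mono)
  moreover have "sum (\<lambda>_. 1 / (real m + 1)) (block (\<lambda>m. m * m) m) = (2 * real m + 1) / (real m + 1)"
    by (simp add: block_def)
  moreover have "1 \<le> (2 * real m + 1) / (real m + 1)" by simp
  ultimately show ?thesis by linarith
qed

lemma tower_seq_in_c0plus_not_l1: "infinite A \<Longrightarrow> tower_seq A \<in> c0plus_not_l1"
  unfolding c0plus_not_l1_def
  using tower_seq_pos tower_seq_tendsto_zero tower_seq_block_sum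
    not_summable_if_block_sums_ge[OF strict_mono_square, of A 1] by auto

lemma tower_seq_ae_le:
  assumes "finite (A - B)"
  shows "ae_le (tower_seq A) (tower_seq B)"
proof -
  have "{n. tower_seq A n > tower_seq B n} \<subseteq> (\<Union>m\<in>A - B. block (\<lambda>m. m * m) m)"
  proof
    fix n assume "n \<in> {n. tower_seq A n > tower_seq B n}"
    then have "block_index (\<lambda>m. m * m) n \<in> A - B"
      using half_pow_le_inverse_sqrt[of n] by (auto simp: tower_seq_def split: if_splits)
    then show "n \<in> (\<Union>m\<in>A - B. block (\<lambda>m. m * m) m)"
      using mem_block_index[OF strict_mono_square] by fastforce
  qed
  moreover have "finite (\<Union>m\<in>A - B. block (\<lambda>m. m * m) m)"
    using assms by (simp add: block_def)
  ultimately show ?thesis unfolding ae_le_def by (rule finite_subset)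
qed

definition exceeding_blocks :: "(nat \<Rightarrow> real) \<Rightarrow> nat set" where
  "exceeding_blocks g = {m. \<exists>n\<in>block (\<lambda>m. m * m) m. (1/2)^n < g n}"

lemma infinite_exceeding_blocks:
  assumes g: "g \<in> c0plus_not_l1"
  shows "infinite (exceeding_blocks g)"
proof
  assume "finite (exceeding_blocks g)"
  then obtain K where K: "\<And>m. m \<in> exceeding_blocks g \<Longrightarrow> m < K"
    by (meson finite_nat_set_iff_bounded)
  have bound: "norm (g n) \<le> (1/2)^n" if "K * K \<le> n" for n
  proof -
    let ?m = "block_index (\<lambda>m. m * m) n"
    have n: "n \<in> block (\<lambda>m. m * m) ?m"
      by (rule mem_block_index[OF strict_mono_square]) simp
    have "K \<le> ?m"
    proof (rule ccontr)
      assume "\<not> K \<le> ?m"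
      then have "Suc ?m * Suc ?m \<le> K * K" by (intro mult_le_mono) auto
      moreover have "n < Suc ?m * Suc ?m" using n by (simp add: block_def)
      ultimately show False using that by linarith
    qed
    then have "?m \<notin> exceeding_blocks g" using K by force
    then have "g n \<le> (1/2)^n" using n by (auto simp: exceeding_blocks_def)
    moreover have "0 < g n" using g by (simp add: c0plus_not_l1_def)
    ultimately show ?thesis by simp
  qed
  have "summable g"
    by (rule summable_comparison_test'[OF _ bound]) simp
  with g show False by (simp add: c0plus_not_l1_def)
qed

lemma exceeding_blocks_almost_subset:
  assumes "ae_le g (tower_seq A)"
  shows "finite (exceeding_blocks g - A)"
proof -
  let ?E = "{n. g n > tower_seq A n}"
  have "exceeding_blocks g - A \<subseteq> (\<Union>n\<in>?E. {..n})"
  proof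
    fix m assume "m \<in> exceeding_blocks g - A"
    then obtain n where n: "n \<in> block (\<lambda>m. m * m) m" "(1/2)^n < g n" "m \<notin> A"
      by (auto simp: exceeding_blocks_def)
    then have "n \<in> ?E"
      using block_index_eq[OF strict_mono_square n(1)] by (simp add: tower_seq_def)
    with le_of_mem_block[OF strict_mono_square n(1)] show "m \<in> (\<Union>n\<in>?E. {..n})" by auto
  qed
  moreover have "finite ?E" using assms by (simp add: ae_le_def)
  ultimately show ?thesis by (simp add: finite_subset)
qed

lemma tower_imp_unbounded_chain:
  "unbounded_decr_chain inf_subsets ae_subset r \<Longrightarrow> unbounded_decr_chain c0plus_not_l1 ae_le r"
  by (erule unbounded_decr_chain_transfer[where \<phi> = tower_seq and \<psi> = exceeding_blocks])
    (auto simp: inf_subsets_def ae_subset_def tower_seq_in_c0plus_not_l1 tower_seq_ae_le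
      infinite_exceeding_blocks exceeding_blocks_almost_subset)

section \<open>Pseudo-intersections along well-orders\<close>

lemma Well_order_refl: "Well_order r \<Longrightarrow> x \<in> Field r \<Longrightarrow> (x, x) \<in> r"
  using wo_rel.REFL[of r] by (auto simp: wo_rel_def refl_on_def)

lemma Well_order_total: "Well_order r \<Longrightarrow> x \<in> Field r \<Longrightarrow> y \<in> Field r \<Longrightarrow> (x, y) \<in> r \<or> (y, x) \<in> r"
  using wo_rel.TOTALS[of r] by (auto simp: wo_rel_def)

lemma Well_order_trans: "Well_order r \<Longrightarrow> (x, y) \<in> r \<Longrightarrow> (y, z) \<in> r \<Longrightarrow> (x, z) \<in> r"
  using wo_rel.TRANS[of r] by (auto simp: wo_rel_def trans_def)

lemma Well_order_antisym: "Well_order r \<Longrightarrow> (x, y) \<in> r \<Longrightarrow> (y, x) \<in> r \<Longrightarrow> x = y"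
  using wo_rel.ANTISYM[of r] by (auto simp: wo_rel_def antisym_def)

lemma Well_order_wf: "Well_order r \<Longrightarrow> wf (r - Id)"
  using wo_rel.WF[of r] by (simp add: wo_rel_def)

lemma Well_order_Refl: "Well_order r \<Longrightarrow> Refl r"
  by (simp add: well_order_on_def linear_order_on_def partial_order_on_def preorder_on_def)

lemma Well_order_le_self_map:
  assumes WO: "Well_order r" and compat: "\<And>a b. (a, b) \<in> r \<Longrightarrow> (f a, f b) \<in> r"
    and inj: "inj_on f (Field r)" and into: "f ` Field r \<subseteq> Field r"
    and x: "x \<in> Field r"
  shows "(x, f x) \<in> r"
  using x
proof (induction x rule: wf_induct[OF Well_order_wf[OF WO]])
  case (1 x)
  show ?case
  proof (rule ccontr)
    assume not_le: "(x, f x) \<notin> r"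
    have fx: "f x \<in> Field r" using into 1(2) by auto
    then have "(f x, x) \<in> r - Id"
      using not_le Well_order_total[OF WO 1(2) fx] Well_order_refl[OF WO 1(2)] by auto
    then have "(f x, f (f x)) \<in> r" using 1(1) fx by blast
    moreover have "(f (f x), f x) \<in> r" using compat \<open>(f x, x) \<in> r - Id\<close> by blast
    ultimately have "f (f x) = f x" using Well_order_antisym[OF WO] by blast
    then have "f x = x" using inj fx 1(2) by (auto dest: inj_onD)
    with not_le Well_order_refl[OF WO 1(2)] show False by simp
  qed
qed

lemma Restr_ordLeq:
  assumes WO: "Well_order r"
  shows "Restr r T \<le>o r"
proof (rule ccontr)
  let ?s = "Restr r T"
  have WO': "Well_order ?s" using Well_order_Restr[OF WO] .
  assume "\<not> ?s \<le>o r"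
  then have "r <o ?s" using not_ordLeq_iff_ordLess[OF WO WO'] by simp
  then obtain f where emb: "embed r ?s f" and not_bij: "\<not> bij_betw f (Field r) (Field ?s)"
    unfolding ordLess_def embedS_def by auto
  have inj: "inj_on f (Field r)" using embed_inj_on[OF WO emb] .
  have into: "f ` Field r \<subseteq> Field ?s" using embed_Field[OF emb] .
  have FT: "Field ?s \<subseteq> Field r \<inter> T" unfolding Field_def by auto
  obtain x where x: "x \<in> Field ?s" "x \<notin> f ` Field r"
    using not_bij inj into unfolding bij_betw_def by auto
  have "(x, f x) \<in> r"
  proof (rule Well_order_le_self_map[OF WO _ inj])
    show "(f a, f b) \<in> r" if "(a, b) \<in> r" for a b
      using embed_compat[OF emb] that unfolding compat_def by blast
    show "f ` Field r \<subseteq> Field r" "x \<in> Field r" using into FT x(1) by auto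
  qed
  then have "(x, f x) \<in> ?s" using into FT x(1) by auto
  then have "x \<in> under ?s (f x)" by (simp add: under_def)
  moreover have "f x \<in> f ` Field r" using x(1) FT by auto
  ultimately have "x \<in> f ` Field r"
    using embed_Field_ofilter[OF WO WO' emb] unfolding ofilter_def by blast
  with x(2) show False ..
qed

definition pseudo_intersections :: "'i rel \<Rightarrow> bool" where
  "pseudo_intersections W \<longleftrightarrow> (\<forall>A :: 'i \<Rightarrow> nat set.
     (\<forall>i\<in>Field W. infinite (A i)) \<and> (\<forall>i j. (i, j) \<in> W \<longrightarrow> finite (A j - A i))
     \<longrightarrow> (\<exists>B. infinite B \<and> (\<forall>i\<in>Field W. finite (B - A i))))"

lemma pseudo_intersectionsD:
  fixes A :: "'i \<Rightarrow> nat set"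
  assumes "pseudo_intersections W" "\<And>i. i \<in> Field W \<Longrightarrow> infinite (A i)"
    "\<And>i j. (i, j) \<in> W \<Longrightarrow> finite (A j - A i)"
  shows "\<exists>B. infinite B \<and> (\<forall>i\<in>Field W. finite (B - A i))"
  using assms(1)[unfolded pseudo_intersections_def, rule_format, of A] assms(2,3) by blast

lemma pseudo_intersections_iff_no_tower:
  assumes WO: "Well_order W"
  shows "pseudo_intersections W \<longleftrightarrow> \<not> unbounded_decr_chain inf_subsets ae_subset W"
proof
  assume PI: "pseudo_intersections W"
  show "\<not> unbounded_decr_chain inf_subsets ae_subset W"
  proof
    assume "unbounded_decr_chain inf_subsets ae_subset W"
    then obtain A :: "_ \<Rightarrow> nat set" where A: "\<forall>i\<in>Field W. infinite (A i)" "\<forall>i j. (i, j) \<in> W \<longrightarrow> finite (A j - A i)"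
      and unbounded: "\<not> (\<exists>B. infinite B \<and> (\<forall>i\<in>Field W. finite (B - A i)))"
      unfolding unbounded_decr_chain_def inf_subsets_def ae_subset_def by (metis mem_Collect_eq)
    have "\<exists>B. infinite B \<and> (\<forall>i\<in>Field W. finite (B - A i))"
      using pseudo_intersectionsD[OF PI, of A] A by blast
    with unbounded show False by blast
  qed
next
  assume no_tower: "\<not> unbounded_decr_chain inf_subsets ae_subset W"
  show "pseudo_intersections W"
    unfolding pseudo_intersections_def
  proof (intro allI impI)
    fix A :: "_ \<Rightarrow> nat set"
    assume "(\<forall>i\<in>Field W. infinite (A i)) \<and> (\<forall>i j. (i, j) \<in> W \<longrightarrow> finite (A j - A i))"
    then show "\<exists>B. infinite B \<and> (\<forall>i\<in>Field W. finite (B - A i))"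
      using no_tower WO unfolding unbounded_decr_chain_def inf_subsets_def ae_subset_def
      by (metis mem_Collect_eq)
  qed
qed

lemma pseudo_intersections_cofinal:
  assumes sub: "V \<subseteq> W"
    and cofinal: "\<And>w. w \<in> Field W \<Longrightarrow> \<exists>z\<in>Field V. (w, z) \<in> W"
    and PI: "pseudo_intersections V"
  shows "pseudo_intersections W"
  unfolding pseudo_intersections_def
proof (intro allI impI)
  fix A :: "_ \<Rightarrow> nat set"
  assume "(\<forall>i\<in>Field W. infinite (A i)) \<and> (\<forall>i j. (i, j) \<in> W \<longrightarrow> finite (A j - A i))"
  then have inf: "\<And>i. i \<in> Field W \<Longrightarrow> infinite (A i)"
    and dec: "\<And>i j. (i, j) \<in> W \<Longrightarrow> finite (A j - A i)" by blast+
  have "Field V \<subseteq> Field W" using sub by (auto simp: Field_def)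
  then have "\<exists>B. infinite B \<and> (\<forall>i\<in>Field V. finite (B - A i))"
    using inf dec sub by (intro pseudo_intersectionsD[OF PI]) auto
  then obtain B where B: "infinite B" "\<And>i. i \<in> Field V \<Longrightarrow> finite (B - A i)" by blast
  have "finite (B - A w)" if w: "w \<in> Field W" for w
  proof -
    obtain z where "z \<in> Field V" "(w, z) \<in> W" using cofinal[OF w] by blast
    then have "finite ((B - A z) \<union> (A z - A w))" using B(2) dec by simp
    then show ?thesis by (rule finite_subset[rotated]) blast
  qed
  with B(1) show "\<exists>B. infinite B \<and> (\<forall>i\<in>Field W. finite (B - A i))" by blast
qed

lemma exists_record:
  assumes WO: "Well_order W" and WOc: "Well_order c" and Fc: "Field c = Field W"
    and w: "w \<in> Field W"
  shows "\<exists>z\<in>Field W. (w, z) \<in> W \<and> (\<forall>y. (y, z) \<in> c \<longrightarrow> (y, z) \<in> W)"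
proof -
  let ?S = "{x \<in> Field W. (w, x) \<in> W}"
  have "w \<in> ?S" using w Well_order_refl[OF WO w] by simp
  then obtain z where z: "z \<in> ?S" and min: "\<And>y. (y, z) \<in> c - Id \<Longrightarrow> y \<notin> ?S"
    by (rule wfE_min[OF Well_order_wf[OF WOc]]) blast
  have "(y, z) \<in> W" if y: "(y, z) \<in> c" for y
  proof (cases "y = z")
    case True then show ?thesis using Well_order_refl[OF WO] z by simp
  next
    case False
    have yF: "y \<in> Field W" using FieldI1[of y z c] y Fc by simp
    have "(y, z) \<in> c - Id" using y False by simp
    then have "(w, y) \<notin> W" using min[of y] yF by simp
    then have "(y, w) \<in> W" using Well_order_total[OF WO yF w] by blast
    moreover have "(w, z) \<in> W" using z by simp
    ultimately show ?thesis by (rule Well_order_trans[OF WO])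
  qed
  with z show ?thesis by blast
qed

lemma pseudo_intersections_all_well_orders:
  fixes \<kappa> :: "'a rel"
  assumes card: "\<And>r :: 'a rel. Card_order r \<Longrightarrow> r \<le>o \<kappa> \<Longrightarrow> pseudo_intersections r"
  shows "Well_order W \<Longrightarrow> W \<le>o \<kappa> \<Longrightarrow> pseudo_intersections (W :: 'a rel)"
proof (induction W rule: wf_induct[OF wf_ordLess])
  case (1 W)
  show ?case
  proof (cases "Card_order W")
    case True then show ?thesis using card 1(3) by blast
  next
    case False
    \<comment> \<open>The records of \<open>W\<close> with respect to the cardinal order on its field form a cofinal
      subchain of smaller order type.\<close>
    let ?c = "|Field W|"
    let ?T = "{z \<in> Field W. \<forall>y. (y, z) \<in> ?c \<longrightarrow> (y, z) \<in> W}"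
    let ?V = "Restr ?c ?T"
    have WOc: "Well_order ?c" by (rule card_of_Well_order)
    have "?c <o W"
      using False not_ordLeq_iff_ordLess[OF WOc 1(2)] by (simp add: Card_order_iff_ordLeq_card_of)
    then have less: "?V <o W" by (rule ordLeq_ordLess_trans[OF Restr_ordLeq[OF WOc]])
    have "?V \<le>o \<kappa>" by (rule ordLeq_transitive[OF ordLess_imp_ordLeq[OF less] 1(3)])
    then have PI: "pseudo_intersections ?V"
      using 1(1)[rule_format, OF less Well_order_Restr[OF WOc]] by blast
    have field: "Field ?V = ?T"
      by (rule Refl_Field_Restr2) (use Well_order_Refl[OF WOc] in \<open>auto simp: Field_card_of\<close>)
    show ?thesis
    proof (rule pseudo_intersections_cofinal[OF _ _ PI])
      show "?V \<subseteq> W" by auto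
      show "\<exists>z\<in>Field ?V. (w, z) \<in> W" if "w \<in> Field W" for w
        using exists_record[OF 1(2) WOc Field_card_of that] field by auto
    qed
  qed
qed

section \<open>Dominating functions\<close>

definition sparse_for :: "(nat \<Rightarrow> nat) \<Rightarrow> nat set \<Rightarrow> bool" where
  "sparse_for g A \<longleftrightarrow> finite {(a, b). a \<in> A \<and> b \<in> A \<and> a < b \<and> (\<exists>n\<le>a. b \<le> g n)}"

lemma sparse_for_almost_subset:
  assumes A: "sparse_for g A" and fin: "finite (B - A)"
  shows "sparse_for g B"
proof -
  let ?V = "\<lambda>A. {(a, b). a \<in> A \<and> b \<in> A \<and> a < b \<and> (\<exists>n\<le>a. b \<le> g n)}"
  let ?F = "B - A"
  define K where "K = Max (insert 0 ?F)"
  define L where "L = Max (g ` {..K})"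
  have K: "x \<le> K" if "x \<in> ?F" for x unfolding K_def using fin that by (intro Max_ge) auto
  have "?V B \<subseteq> ?V A \<union> (?F \<times> {..L}) \<union> ({..K} \<times> ?F)"
  proof
    fix p assume "p \<in> ?V B"
    then obtain a b n where p: "p = (a, b)" and ab: "a \<in> B" "b \<in> B" "a < b" "n \<le> a" "b \<le> g n"
      by blast
    consider "a \<notin> A" | "a \<in> A" "b \<in> A" | "b \<notin> A" by blast
    then show "p \<in> ?V A \<union> (?F \<times> {..L}) \<union> ({..K} \<times> ?F)"
    proof cases
      case 1
      then have "n \<le> K" using K[of a] ab by simp
      then have "g n \<le> L" unfolding L_def by (intro Max_ge) auto
      with 1 ab p show ?thesis by simp
    next
      case 2
      with ab p show ?thesis by blast
    next
      case 3
      with K[of b] ab p show ?thesis by simp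
    qed
  qed
  moreover have "finite (?V A \<union> (?F \<times> {..L}) \<union> ({..K} \<times> ?F))"
    using A fin by (simp add: sparse_for_def)
  ultimately show ?thesis unfolding sparse_for_def by (rule finite_subset)
qed

lemma exists_sparse_subset:
  assumes B: "infinite B"
  shows "\<exists>A\<subseteq>B. infinite A \<and> sparse_for g A"
proof -
  define M where "M x = Max (g ` {..x}) + x" for x
  define next_big where "next_big x = (LEAST y. y \<in> B \<and> M x < y)" for x
  have next_big: "next_big x \<in> B \<and> M x < next_big x" for x
    unfolding next_big_def by (rule LeastI_ex) (meson B finite_nat_set_iff_bounded_le not_le)
  obtain a0 where a0: "a0 \<in> B" using B by (metis finite.emptyI ex_in_conv)
  define a where "a k = (next_big ^^ k) a0" for k
  have a_Suc: "a (Suc k) = next_big (a k)" for k unfolding a_def by simp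
  have aB: "a k \<in> B" for k by (cases k) (auto simp: a_Suc next_big a0 a_def[of 0])
  have step: "M (a k) < a (Suc k)" for k unfolding a_Suc using next_big by blast
  have sm: "strict_mono a"
    unfolding strict_mono_Suc_iff using step by (metis M_def add_lessD1 add.commute)
  have far: "M (a i) < a j" if "i < j" for i j
    using step[of i] strict_mono_less_eq[OF sm, of "Suc i" j] that by simp
  have no_bad: "{(x, y). x \<in> range a \<and> y \<in> range a \<and> x < y \<and> (\<exists>n\<le>x. y \<le> g n)} = {}"
  proof -
    have False if "a i < a j" "n \<le> a i" "a j \<le> g n" for i j n
    proof -
      have "M (a i) < a j" using that(1) far strict_mono_less[OF sm] by blast
      moreover have "g n \<le> Max (g ` {..a i})" using that(2) by (intro Max_ge) auto
      ultimately show False using that(3) unfolding M_def by linarith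
    qed
    then show ?thesis by blast
  qed
  have "infinite (range a)" using strict_mono_imp_inj_on[OF sm] by (simp add: finite_image_iff)
  moreover have "range a \<subseteq> B" using aB by auto
  moreover have "sparse_for g (range a)" unfolding sparse_for_def no_bad by simp
  ultimately show ?thesis by blast
qed

definition next_in :: "nat set \<Rightarrow> nat \<Rightarrow> nat" where
  "next_in D n = (LEAST x. x \<in> D \<and> n \<le> x)"

lemma next_in_mem: "infinite D \<Longrightarrow> next_in D n \<in> D \<and> n \<le> next_in D n"
  unfolding next_in_def by (rule LeastI_ex) (meson finite_nat_set_iff_bounded_le nle_le)

lemma sparse_for_dominated:
  assumes D: "infinite D" and sparse: "sparse_for g D"
  shows "finite {n. g n > next_in D (Suc (next_in D n))}"
proof -
  let ?bad = "{(a, b). a \<in> D \<and> b \<in> D \<and> a < b \<and> (\<exists>n\<le>a. b \<le> g n)}"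
  have "{n. g n > next_in D (Suc (next_in D n))} \<subseteq> (\<Union>a\<in>fst ` ?bad. {..a})"
  proof
    fix n assume "n \<in> {n. g n > next_in D (Suc (next_in D n))}"
    then have "(next_in D n, next_in D (Suc (next_in D n))) \<in> ?bad"
      using next_in_mem[OF D, of n] next_in_mem[OF D, of "Suc (next_in D n)"] by auto
    then show "n \<in> (\<Union>a\<in>fst ` ?bad. {..a})" using next_in_mem[OF D, of n] by force
  qed
  moreover have "finite (\<Union>a\<in>fst ` ?bad. {..a})" using sparse by (simp add: sparse_for_def)
  ultimately show ?thesis by (rule finite_subset)
qed

lemma exists_dominating:
  fixes r :: "'a rel" and h :: "'a \<Rightarrow> nat \<Rightarrow> nat"
  assumes WO: "Well_order r" and PI: "\<And>D. pseudo_intersections (Restr r D)"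
  shows "\<exists>H. \<forall>i\<in>Field r. finite {n. h i n > H n}"
proof -
  let ?R = "r - Id"
  let ?good = "\<lambda>A i X. infinite X \<and> sparse_for (h i) X \<and> (\<forall>j. (j, i) \<in> ?R \<longrightarrow> finite (X - A j))"
  \<comment> \<open>Transfinite recursion: \<open>A i\<close> is a sparse subset of a pseudo-intersection of the \<open>A j\<close>, \<open>j < i\<close>.\<close>
  define A :: "'a \<Rightarrow> nat set" where "A = wfrec ?R (\<lambda>A i. SOME X. ?good A i X)"
  have A_eq: "A i = (SOME X. ?good A i X)" for i
    unfolding A_def by (subst wfrec[OF Well_order_wf[OF WO]]) (simp add: cut_apply)
  have A_good: "?good A i (A i)" for i
  proof (induction i rule: wf_induct[OF Well_order_wf[OF WO]])
    case (1 i)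
    let ?P = "{j. (j, i) \<in> ?R}"
    have field: "Field (Restr r ?P) = ?P"
      by (rule Refl_Field_Restr2) (use Well_order_Refl[OF WO] in \<open>auto simp: Field_def\<close>)
    have inf: "infinite (A j)" if "j \<in> Field (Restr r ?P)" for j
      using 1 that unfolding field by blast
    have dec: "finite (A k - A j)" if "(j, k) \<in> Restr r ?P" for j k
      using 1 that by (cases "j = k") auto
    have "\<exists>B. infinite B \<and> (\<forall>j\<in>Field (Restr r ?P). finite (B - A j))"
      by (rule pseudo_intersectionsD[OF PI[of ?P]]) (use inf dec in auto)
    then obtain B where B: "infinite B" "\<And>j. j \<in> Field (Restr r ?P) \<Longrightarrow> finite (B - A j)"
      by blast
    obtain X where X: "X \<subseteq> B" "infinite X" "sparse_for (h i) X"
      using exists_sparse_subset[OF B(1)] by blast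
    have "finite (X - A j)" if "(j, i) \<in> ?R" for j
      using B(2)[unfolded field, of j] that X(1) by (meson Diff_mono finite_subset mem_Collect_eq order_refl)
    then have "?good A i X" using X by blast
    then show ?case unfolding A_eq[of i] by (rule someI)
  qed
  have inf: "infinite (A i)" if "i \<in> Field r" for i using A_good by blast
  have dec: "finite (A j - A i)" if "(i, j) \<in> r" for i j
    using A_good[of j] that by (cases "i = j") auto
  have "\<exists>D. infinite D \<and> (\<forall>i\<in>Field r. finite (D - A i))"
    by (rule pseudo_intersectionsD[OF PI[of "Field r", unfolded Restr_Field]]) (use inf dec in auto)
  then obtain D where D: "infinite D" "\<And>i. i \<in> Field r \<Longrightarrow> finite (D - A i)"
    by blast
  have "sparse_for (h i) D" if "i \<in> Field r" for i
    using A_good[of i] by (intro sparse_for_almost_subset[OF _ D(2)[OF that]]) blast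
  then show ?thesis
    using sparse_for_dominated[OF D(1)] by (intro exI[of _ "\<lambda>n. next_in D (Suc (next_in D n))"]) blast
qed

section \<open>Dyadic witnesses on blocks\<close>

lemma half_pow_Least_le: "0 < v \<Longrightarrow> (1/2::real)^(LEAST k. (1/2::real)^k \<le> v) \<le> v"
  by (rule LeastI_ex) (use real_arch_pow_inv[of v "1/2"] in \<open>auto intro: less_imp_le\<close>)

text \<open>Dyadic codes: \<open>0\<close> stands for the value \<open>0\<close> and \<open>Suc k\<close> for \<open>(1/2)^k\<close>.\<close>
definition dyadic :: "nat \<Rightarrow> real" where
  "dyadic k = (if k = 0 then 0 else (1/2)^(k - 1))"

definition dyadic_below :: "real \<Rightarrow> nat \<Rightarrow> nat" where
  "dyadic_below v K = (let k = LEAST k. (1/2::real)^k \<le> v in if k \<le> K then Suc k else 0)"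

lemma dyadic_below_le_Suc: "dyadic_below v K \<le> Suc K"
  by (simp add: dyadic_below_def Let_def)

lemma dyadic_below_bounds:
  assumes "0 < v" "v \<le> 1"
  shows "dyadic (dyadic_below v K) \<le> v" and "v / 2 - (1/2)^K \<le> dyadic (dyadic_below v K)"
proof -
  define k where "k = (LEAST k. (1/2::real)^k \<le> v)"
  have k: "(1/2::real)^k \<le> v" unfolding k_def using assms(1) by (rule half_pow_Least_le)
  have less: "v < (1/2)^j" if "j < k" for j
    using not_less_Least[OF that[unfolded k_def]] by simp
  have "v \<le> 2 * (1/2)^k"
    using assms(2) less[of "k - 1"] by (cases k) auto
  show "dyadic (dyadic_below v K) \<le> v"
    using k assms(1) by (simp add: dyadic_below_def dyadic_def k_def[symmetric] Let_def)
  show "v / 2 - (1/2)^K \<le> dyadic (dyadic_below v K)"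
  proof (cases "k \<le> K")
    case True
    then have "dyadic (dyadic_below v K) = (1/2)^k"
      by (simp add: dyadic_below_def dyadic_def k_def[symmetric] Let_def)
    moreover have "(0::real) \<le> (1/2)^K" by simp
    ultimately show ?thesis using \<open>v \<le> 2 * (1/2)^k\<close> by linarith
  next
    case False
    with less[of K] assms(1) show ?thesis
      by (simp add: dyadic_below_def dyadic_def k_def[symmetric] Let_def)
  qed
qed

text \<open>The code bound
  \<open>2 t(m+1) + 2\<close> leaves only finitely many profiles per block, yet is large enough that discretising
  loses less than \<open>1/2\<close> of the mass of a block (\<open>card_mult_half_pow_le\<close>).\<close>
definition block_witnesses :: "(nat \<Rightarrow> nat) \<Rightarrow> (nat \<Rightarrow> real) \<Rightarrow> (nat \<times> nat list) set" where
  "block_witnesses t f = {(m, ks). length ks = t (Suc m) - t m \<and> set ks \<subseteq> {..2 * t (Suc m) + 2} \<and>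
     (\<forall>n\<in>block t m. dyadic (ks ! (n - t m)) \<le> f n) \<and> 1/2 \<le> (\<Sum>n\<in>block t m. dyadic (ks ! (n - t m)))}"

lemma finite_block_witnesses:
  assumes "X \<subseteq> block_witnesses t f" "finite (fst ` X)"
  shows "finite X"
proof -
  have "X \<subseteq> (\<Union>m\<in>fst ` X. {m} \<times> {ks. set ks \<subseteq> {..2 * t (Suc m) + 2} \<and> length ks = t (Suc m) - t m})"
    using assms(1) by (force simp: block_witnesses_def)
  moreover have "finite \<dots>"
    using assms(2) by (intro finite_UN_I finite_cartesian_product finite_lists_length_eq) auto
  ultimately show ?thesis by (rule finite_subset)
qed

lemma block_witnesses_almost_mono:
  assumes "strict_mono t" "finite {n. f n > g n}"
  shows "finite (block_witnesses t f - block_witnesses t g)"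
proof -
  have "fst ` (block_witnesses t f - block_witnesses t g) \<subseteq> (\<Union>n\<in>{n. f n > g n}. {..n})"
  proof
    fix m assume "m \<in> fst ` (block_witnesses t f - block_witnesses t g)"
    then obtain ks where "(m, ks) \<in> block_witnesses t f" "(m, ks) \<notin> block_witnesses t g" by auto
    then obtain n where "n \<in> block t m" "g n < f n"
      unfolding block_witnesses_def by force
    with le_of_mem_block[OF assms(1)] show "m \<in> (\<Union>n\<in>{n. f n > g n}. {..n})" by auto
  qed
  then have "finite (fst ` (block_witnesses t f - block_witnesses t g))"
    by (rule finite_subset) (use assms(2) in simp)
  then show ?thesis by (rule finite_block_witnesses[rotated]) blast
qed

lemma card_mult_half_pow_le: "real T * (1/2)^(2 * T + 1) \<le> 1/2"
proof -
  have "real T \<le> 2^T" using real_Suc_le_two_power[of T] by simp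
  also have "(2::real)^T \<le> 2^(2 * T)" by (rule power_increasing) simp_all
  finally have "real T / 2^(2 * T) \<le> 1" by simp
  moreover have "real T * (1/2)^(2 * T + 1) = (real T / 2^(2 * T)) / 2"
    by (simp add: power_add power_one_over)
  ultimately show ?thesis by simp
qed

lemma block_witness_exists:
  assumes "strict_mono t" and f: "\<And>n. n \<in> block t m \<Longrightarrow> 0 < f n \<and> f n \<le> 1"
    and mass: "2 \<le> sum f (block t m)"
  shows "\<exists>ks. (m, ks) \<in> block_witnesses t f"
proof -
  let ?K = "2 * t (Suc m) + 1"
  define ks where "ks = map (\<lambda>j. dyadic_below (f (t m + j)) ?K) [0..<t (Suc m) - t m]"
  have nth: "ks ! (n - t m) = dyadic_below (f n) ?K" if "n \<in> block t m" for n
    using that by (auto simp: ks_def block_def)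
  have "(\<Sum>n\<in>block t m. f n / 2 - (1/2)^?K) \<le> (\<Sum>n\<in>block t m. dyadic (ks ! (n - t m)))"
  proof (rule sum_mono)
    fix n assume n: "n \<in> block t m"
    show "f n / 2 - (1/2)^?K \<le> dyadic (ks ! (n - t m))"
      using dyadic_below_bounds(2)[of "f n" ?K] f[OF n] nth[OF n] by simp
  qed
  moreover have "(\<Sum>n\<in>block t m. f n / 2 - (1/2)^?K)
      = sum f (block t m) / 2 - real (card (block t m)) * (1/2)^?K"
    by (simp add: sum_subtractf sum_divide_distrib)
  moreover have "real (card (block t m)) * (1/2)^?K \<le> real (t (Suc m)) * (1/2)^?K"
    by (intro mult_right_mono) (simp_all add: block_def)
  moreover note card_mult_half_pow_le[of "t (Suc m)"]
  ultimately have "1/2 \<le> (\<Sum>n\<in>block t m. dyadic (ks ! (n - t m)))" using mass by linarith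
  then have "(m, ks) \<in> block_witnesses t f"
    using nth f dyadic_below_bounds(1) dyadic_below_le_Suc unfolding block_witnesses_def
    by (auto simp: ks_def)
  then show ?thesis ..
qed

lemma infinite_block_witnesses:
  assumes "strict_mono t" and f: "f \<in> c0plus_not_l1" and mass: "finite {m. sum f (block t m) < 2}"
  shows "infinite (fst ` block_witnesses t f)"
proof
  assume fin: "finite (fst ` block_witnesses t f)"
  obtain N where N: "\<And>n. N \<le> n \<Longrightarrow> f n < 1"
    using order_tendstoD(2)[of f 0 sequentially 1] f unfolding c0plus_not_l1_def eventually_sequentially by auto
  have "m \<in> fst ` block_witnesses t f \<union> {m. sum f (block t m) < 2} \<union> {..<N}" for m
  proof (rule ccontr)
    assume "m \<notin> fst ` block_witnesses t f \<union> {m. sum f (block t m) < 2} \<union> {..<N}"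
    then have m: "m \<notin> fst ` block_witnesses t f" "2 \<le> sum f (block t m)" "N \<le> m" by auto
    have "0 < f n \<and> f n \<le> 1" if "n \<in> block t m" for n
      using N[of n] le_of_mem_block[OF assms(1) that] m(3) f by (auto simp: c0plus_not_l1_def)
    then obtain ks where "(m, ks) \<in> block_witnesses t f"
      using block_witness_exists[OF assms(1) _ m(2)] by blast
    with m(1) show False by force
  qed
  then have "UNIV = fst ` block_witnesses t f \<union> {m. sum f (block t m) < 2} \<union> {..<N}" by blast
  with fin mass show False by (metis finite_Un finite_lessThan infinite_UNIV_nat)
qed

section \<open>Lower bounds of short chains of sequences\<close>

lemma partial_sum_reaches:
  fixes f :: "nat \<Rightarrow> real"
  assumes pos: "\<And>n. 0 \<le> f n" and not_summable: "\<not> summable f"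
  shows "\<exists>q>p. c \<le> sum f {p..<q}"
proof (rule ccontr)
  assume small: "\<not> (\<exists>q>p. c \<le> sum f {p..<q})"
  have "0 \<le> c" using small pos[of p] by force
  have "sum f {..n} \<le> sum f {..<p} + c" for n
  proof -
    have "sum f {..n} \<le> sum f {..<max p (Suc n)}" using pos by (intro sum_mono2) auto
    also have "\<dots> = sum f {..<p} + sum f {p..<max p (Suc n)}"
      by (simp add: lessThan_atLeast0 sum.atLeastLessThan_concat)
    also have "sum f {p..<max p (Suc n)} \<le> c"
      using small \<open>0 \<le> c\<close> by (cases "p < Suc n") (auto simp: max_def not_le)
    finally show ?thesis by simp
  qed
  then have "summable f" by (intro bounded_imp_summable[OF pos])
  with not_summable show False by simp
qed

lemma block_sum_ge_if_Least_le:
  fixes f :: "nat \<Rightarrow> real"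
  assumes pos: "\<And>n. 0 \<le> f n" and "\<not> summable f"
    and "(LEAST q. t m < q \<and> c \<le> sum f {t m..<q}) \<le> t (Suc m)"
  shows "c \<le> sum f (block t m)"
proof -
  let ?q = "LEAST q. t m < q \<and> c \<le> sum f {t m..<q}"
  have "t m < ?q \<and> c \<le> sum f {t m..<?q}"
    by (rule LeastI_ex) (rule partial_sum_reaches[OF assms(1,2)])
  moreover have "sum f {t m..<?q} \<le> sum f (block t m)"
    unfolding block_def using assms(3) pos by (intro sum_mono2) auto
  ultimately show ?thesis by linarith
qed

lemma exists_minorant_and_blocks:
  fixes r :: "'a rel" and f :: "'a \<Rightarrow> nat \<Rightarrow> real"
  assumes WO: "Well_order r" and PI: "\<And>D. pseudo_intersections (Restr r D)"
    and f: "\<And>i. i \<in> Field r \<Longrightarrow> f i \<in> c0plus_not_l1"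
  obtains l t where "\<And>n. 0 < l n" "\<And>i. i \<in> Field r \<Longrightarrow> ae_le l (f i)"
    "strict_mono t" "t 0 = 0" "\<And>i. i \<in> Field r \<Longrightarrow> finite {m. sum (f i) (block t m) < 2}"
proof -
  define e where "e i n = (LEAST k. (1/2::real)^k \<le> f i n)" for i n
  define q where "q i n = (LEAST q. n < q \<and> 2 \<le> sum (f i) {n..<q})" for i n
  obtain H where H: "\<And>i. i \<in> Field r \<Longrightarrow> finite {n. max (e i n) (q i n) > H n}"
    using exists_dominating[OF WO PI, of "\<lambda>i n. max (e i n) (q i n)"] by blast
  define t where "t = rec_nat 0 (\<lambda>_ x. max (Suc x) (H x))"
  have t0: "t 0 = 0" and t_Suc: "t (Suc m) = max (Suc (t m)) (H (t m))" for m
    unfolding t_def by simp_all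
  have sm: "strict_mono t" unfolding strict_mono_Suc_iff by (simp add: t_Suc less_max_iff_disj)
  show thesis
  proof (rule that[of "\<lambda>n. (1/2)^(H n)" t, OF _ _ sm t0])
    show "0 < (1/2::real)^(H n)" for n by simp
  next
    fix i assume i: "i \<in> Field r"
    have pos: "0 < f i n" and not_summable: "\<not> summable (f i)" for n
      using f[OF i] by (simp_all add: c0plus_not_l1_def)
    have "(1/2)^(H n) \<le> f i n" if "e i n \<le> H n" for n
    proof -
      have "(1/2::real)^(H n) \<le> (1/2)^(e i n)" using that by (intro power_decreasing) auto
      also have "\<dots> \<le> f i n" unfolding e_def using pos by (rule half_pow_Least_le)
      finally show ?thesis .
    qed
    then have "{n. (1/2)^(H n) > f i n} \<subseteq> {n. max (e i n) (q i n) > H n}"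
      by (auto simp: not_le[symmetric])
    then show "ae_le (\<lambda>n. (1/2)^(H n)) (f i)"
      unfolding ae_le_def using H[OF i] by (rule finite_subset)
    have "2 \<le> sum (f i) (block t m)" if "q i (t m) \<le> H (t m)" for m
      using that pos less_imp_le
      by (intro block_sum_ge_if_Least_le[OF _ not_summable]) (auto simp: q_def t_Suc)
    then have "{m. sum (f i) (block t m) < 2} \<subseteq> t -` {n. max (e i n) (q i n) > H n}"
      by (auto simp: not_le[symmetric])
    moreover have "finite (t -` {n. max (e i n) (q i n) > H n})"
      using H[OF i] strict_mono_imp_inj_on[OF sm] by (rule finite_vimageI)
    ultimately show "finite {m. sum (f i) (block t m) < 2}" by (rule finite_subset)
  qed
qed

lemma glue_block_witnesses:
  assumes sm: "strict_mono t" and t0: "t 0 = 0"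
    and S: "S \<subseteq> block_witnesses t f0" and inf: "infinite (fst ` S)"
  obtains g where "\<And>n. l n \<le> g n" "\<not> summable g"
    "\<And>f. (\<And>n. 0 < f n) \<Longrightarrow> ae_le l f \<Longrightarrow> finite (S - block_witnesses t f) \<Longrightarrow> ae_le g f"
proof -
  define ks where "ks m = (SOME ks. (m, ks) \<in> S)" for m
  have ks: "(m, ks m) \<in> S" if "m \<in> fst ` S" for m
    unfolding ks_def by (rule someI_ex) (use that in force)
  define w where "w n = (let m = block_index t n in
      if m \<in> fst ` S then dyadic (ks m ! (n - t m)) else 0)" for n
  define g where "g n = max (l n) (w n)" for n
  have w: "w n = dyadic (ks m ! (n - t m))" if "m \<in> fst ` S" "n \<in> block t m" for m n
    using that block_index_eq[OF sm] by (simp add: w_def)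
  show thesis
  proof (rule that[of g])
    show "l n \<le> g n" for n by (simp add: g_def)
    have mass: "1/2 \<le> sum g (block t m)" if m: "m \<in> fst ` S" for m
    proof -
      have "1/2 \<le> (\<Sum>n\<in>block t m. dyadic (ks m ! (n - t m)))"
        using ks[OF m] S by (auto simp: block_witnesses_def)
      also have "\<dots> \<le> sum g (block t m)"
        using w[OF m] by (intro sum_mono) (simp add: g_def)
      finally show ?thesis .
    qed
    show "\<not> summable g"
      by (rule not_summable_if_block_sums_ge[OF sm inf _ mass]) simp
  next
    fix f assume f_pos: "\<And>n. 0 < f n" and l: "ae_le l f" and fin: "finite (S - block_witnesses t f)"
    have "{n. g n > f n} \<subseteq> {n. l n > f n} \<union> (\<Union>m\<in>fst ` (S - block_witnesses t f). block t m)"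
    proof
      fix n assume "n \<in> {n. g n > f n}"
      moreover define m where "m = block_index t n"
      moreover have n: "n \<in> block t m" unfolding m_def by (rule mem_block_index[OF sm t0])
      ultimately consider "l n > f n" | "m \<in> fst ` S" "dyadic (ks m ! (n - t m)) > f n"
        using f_pos[of n] by (force simp: g_def w_def Let_def split: if_splits)
      then show "n \<in> {n. l n > f n} \<union> (\<Union>m\<in>fst ` (S - block_witnesses t f). block t m)"
      proof cases
        case 2
        then have "(m, ks m) \<notin> block_witnesses t f"
          using n by (force simp: block_witnesses_def)
        with ks[OF 2(1)] n show ?thesis by force
      qed simp
    qed
    moreover have "finite ({n. l n > f n} \<union> (\<Union>m\<in>fst ` (S - block_witnesses t f). block t m))"
      using l fin by (simp add: ae_le_def block_def)
    ultimately show "ae_le g f" unfolding ae_le_def by (rule finite_subset)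
  qed
qed

lemma ae_le_tendsto_zero:
  assumes "\<And>n. 0 \<le> g n" "ae_le g f" "f \<longlonglongrightarrow> 0"
  shows "g \<longlonglongrightarrow> 0"
proof (rule tendsto_sandwich[of "\<lambda>_. 0" g sequentially f])
  have "finite {n. \<not> g n \<le> f n}" using assms(2) by (simp add: ae_le_def not_le)
  then show "\<forall>\<^sub>F n in sequentially. g n \<le> f n"
    by (simp add: eventually_cofinite cofinite_eq_sequentially[symmetric])
qed (use assms in simp_all)

lemma exists_common_witnesses:
  fixes r :: "'a rel" and f :: "'a \<Rightarrow> nat \<Rightarrow> real"
  assumes PI: "pseudo_intersections r" and t: "strict_mono t"
    and f: "\<And>i. i \<in> Field r \<Longrightarrow> f i \<in> c0plus_not_l1"
    and mass: "\<And>i. i \<in> Field r \<Longrightarrow> finite {m. sum (f i) (block t m) < 2}"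
    and dec: "\<And>i j. (i, j) \<in> r \<Longrightarrow> ae_le (f j) (f i)"
    and i0: "i0 \<in> Field r"
  obtains S where "S \<subseteq> block_witnesses t (f i0)" "infinite (fst ` S)"
    "\<And>i. i \<in> Field r \<Longrightarrow> finite (S - block_witnesses t (f i))"
proof -
  define W where "W i = to_nat ` block_witnesses t (f i)" for i
  have W_inf: "infinite (W i)" if "i \<in> Field r" for i
    using infinite_block_witnesses[OF t f[OF that] mass[OF that]]
    by (auto simp: W_def finite_image_iff[OF inj_on_to_nat] dest: finite_imageI)
  have W_dec: "finite (W j - W i)" if "(i, j) \<in> r" for i j
  proof -
    have "W j - W i \<subseteq> to_nat ` (block_witnesses t (f j) - block_witnesses t (f i))"
      by (auto simp: W_def)
    moreover have "finite (block_witnesses t (f j) - block_witnesses t (f i))"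
      using dec[OF that] t by (simp add: ae_le_def block_witnesses_almost_mono)
    ultimately show ?thesis by (simp add: finite_subset)
  qed
  have "\<exists>D. infinite D \<and> (\<forall>i\<in>Field r. finite (D - W i))"
    by (rule pseudo_intersectionsD[OF PI]) (use W_inf W_dec in auto)
  then obtain D where D: "infinite D" "\<And>i. i \<in> Field r \<Longrightarrow> finite (D - W i)" by blast
  define S where "S = {x \<in> block_witnesses t (f i0). to_nat x \<in> D}"
  have "finite (S - block_witnesses t (f i))" if "i \<in> Field r" for i
  proof -
    have "to_nat ` (S - block_witnesses t (f i)) \<subseteq> D - W i" by (auto simp: S_def W_def)
    then show ?thesis using D(2)[OF that] by (metis finite_image_iff finite_subset inj_on_to_nat)
  qed
  moreover have "D \<subseteq> (D - W i0) \<union> to_nat ` S" by (auto simp: S_def W_def)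
  then have "infinite S" using D i0 by (metis finite_Un finite_imageI finite_subset)
  then have "infinite (fst ` S)" using finite_block_witnesses[of S t "f i0"] by (auto simp: S_def)
  ultimately show thesis using that[of S] by (auto simp: S_def)
qed

lemma pseudo_intersections_imp_lower_bound:
  fixes r :: "'a rel" and f :: "'a \<Rightarrow> nat \<Rightarrow> real"
  assumes WO: "Well_order r" and PI: "\<And>D. pseudo_intersections (Restr r D)"
    and f: "\<And>i. i \<in> Field r \<Longrightarrow> f i \<in> c0plus_not_l1"
    and dec: "\<And>i j. (i, j) \<in> r \<Longrightarrow> ae_le (f j) (f i)"
  shows "\<exists>g\<in>c0plus_not_l1. \<forall>i\<in>Field r. ae_le g (f i)"
proof (cases "Field r = {}")
  case True
  then show ?thesis using tower_seq_in_c0plus_not_l1[of UNIV] by auto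
next
  case False
  then obtain i0 where i0: "i0 \<in> Field r" by blast
  have f_pos: "\<And>n. 0 < f i n" and f_lim: "f i \<longlonglongrightarrow> 0" if "i \<in> Field r" for i
    using f[OF that] by (simp_all add: c0plus_not_l1_def)
  obtain l t where l: "\<And>n. 0 < l n" "\<And>i. i \<in> Field r \<Longrightarrow> ae_le l (f i)"
    and t: "strict_mono t" "t 0 = 0" and mass: "\<And>i. i \<in> Field r \<Longrightarrow> finite {m. sum (f i) (block t m) < 2}"
    using exists_minorant_and_blocks[of r f, OF WO PI f] by blast
  obtain S where S: "S \<subseteq> block_witnesses t (f i0)" "infinite (fst ` S)"
    and S_almost: "\<And>i. i \<in> Field r \<Longrightarrow> finite (S - block_witnesses t (f i))"
    using exists_common_witnesses[of r t f, OF PI[of "Field r", unfolded Restr_Field] t(1) f mass dec i0]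
    by blast
  obtain g where g: "\<And>n. l n \<le> g n" "\<not> summable g"
    "\<And>f. (\<And>n. 0 < f n) \<Longrightarrow> ae_le l f \<Longrightarrow> finite (S - block_witnesses t f) \<Longrightarrow> ae_le g f"
    using glue_block_witnesses[OF t S] by blast
  have g_le: "ae_le g (f i)" if "i \<in> Field r" for i
    using g(3)[OF f_pos[OF that] l(2)[OF that] S_almost[OF that]] .
  have g_pos: "0 < g n" for n using l(1) g(1) by (rule less_le_trans)
  then have "g \<longlonglongrightarrow> 0"
    using ae_le_tendsto_zero[OF _ g_le[OF i0] f_lim[OF i0]] less_imp_le by blast
  with g_pos g(2) have "g \<in> c0plus_not_l1" by (simp add: c0plus_not_l1_def)
  with g_le show ?thesis by blast
qed

lemma unbounded_chain_imp_tower: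
  fixes \<kappa> r :: "'a rel"
  assumes r: "r \<le>o \<kappa>" "unbounded_decr_chain c0plus_not_l1 ae_le r"
  shows "t_le inf_subsets ae_subset \<kappa>"
proof (rule ccontr)
  assume no_tower: "\<not> t_le inf_subsets ae_subset \<kappa>"
  have "pseudo_intersections s" if "Card_order s" "s \<le>o \<kappa>" for s :: "'a rel"
    using no_tower that pseudo_intersections_iff_no_tower[of s] card_order_on_well_order_on
    unfolding t_le_def by blast
  then have PI: "pseudo_intersections W" if "Well_order W" "W \<le>o \<kappa>" for W :: "'a rel"
    using pseudo_intersections_all_well_orders that by blast
  obtain f where WO: "Well_order r" and f: "\<forall>i\<in>Field r. f i \<in> c0plus_not_l1"
    and dec: "\<forall>i j. (i, j) \<in> r \<longrightarrow> ae_le (f j) (f i)"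
    and unbounded: "\<not> (\<exists>b\<in>c0plus_not_l1. \<forall>i\<in>Field r. ae_le b (f i))"
    using r(2) unfolding unbounded_decr_chain_def by blast
  have "pseudo_intersections (Restr r D)" for D
    using PI[OF Well_order_Restr[OF WO] ordLeq_transitive[OF Restr_ordLeq[OF WO] r(1)]] .
  with f dec unbounded show False
    using pseudo_intersections_imp_lower_bound[OF WO, of f] by blast
qed

theorem mainTheorem6:
  fixes \<kappa> :: "'a rel"
  assumes "Card_order \<kappa>"
  shows "t_le c0plus_not_l1 ae_le \<kappa> \<longleftrightarrow> t_le inf_subsets ae_subset \<kappa>"
proof
  assume "t_le c0plus_not_l1 ae_le \<kappa>"
  then obtain r :: "'a rel" where "r \<le>o \<kappa>" "unbounded_decr_chain c0plus_not_l1 ae_le r"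
    unfolding t_le_def by blast
  then show "t_le inf_subsets ae_subset \<kappa>" by (rule unbounded_chain_imp_tower)
next
  assume "t_le inf_subsets ae_subset \<kappa>"
  then show "t_le c0plus_not_l1 ae_le \<kappa>"
    unfolding t_le_def using tower_imp_unbounded_chain by blast
qed

end
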